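(* Let $G$ be a map graph with a corresponding planar bipartite graph $B$, let $k$ be a positive integer, let $\mathcal{D}=(T,\beta_{\mathcal{D}})$ be a nice tree decomposition of $B$ of width less than $5\sqrt{2k}$, and let $\mathcal{D}'=(T,\beta_{\mathcal{D}'})$ be the tree decomposition of $G$ derived from $\mathcal{D}$. Let $C$ be a cycle in $G$. Then there is a cycle $C'$ in $G$ of the same length as $C$ such that for every node $t\in V(T)$, the number of edges of $C'$ with one endpoint in $\beta_{\mathcal{D}'}(t)$ and the other in $V(G)\setminus\gamma_{\mathcal{D}'}(t)$ is at most $20\sqrt{2k}$.
   Context: All graphs are finite and simple. For a bipartite graph $B$ with bipartition $V(B)=W\uplus U$, the half-square of $B$ is the graph on $W$ in which two vertices are adjacent iff they are at distance exactly $2$ in $B$. A graph $G$ is a map graph iff it is the half-square of some planar bipartite graph $B$; such $B$ (with $W=V(G)$) is a corresponding planar bipartite graph, and $S(G)=U$ is the set of special vertices. A tree decomposition $(T,\beta)$: rooted tree, bags covering all vertices and edges, each vertex's nodes inducing a connected subtree; width is max bag size minus one. $\gamma_{\mathcal{D}}(t)$ (resp. $\gamma_{\mathcal{D}'}(t)$) is the union of bags at $t$ and its descendants. A nice tree decomposition has empty root bag and leaf, introduce, forget and join nodes in the standard sense. The decomposition derived from $\mathcal{D}$ has the same tree and bags $\beta_{\mathcal{D}'}(t)=(\beta_{\mathcal{D}}(t)\cap V(G))\cup\bigcup_{s\in\beta_{\mathcal{D}}(t)\cap S(G)}(N_B(s)\cap\gamma_{\mathcal{D}}(t))$. *)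

theory Defs
  imports "HOL-Analysis.Analysis"
begin

definition simple_graph :: "'a set \<Rightarrow> 'a set set \<Rightarrow> bool" where
  "simple_graph V E \<longleftrightarrow> finite V \<and>
     (\<forall>e\<in>E. \<exists>u v. e = {u, v} \<and> u \<noteq> v \<and> u \<in> V \<and> v \<in> V)"

definition bipartition :: "'a set \<Rightarrow> 'a set set \<Rightarrow> 'a set \<Rightarrow> 'a set \<Rightarrow> bool" where
  "bipartition V E W U \<longleftrightarrow> V = W \<union> U \<and> W \<inter> U = {} \<and>
     (\<forall>e\<in>E. \<exists>w u. e = {w, u} \<and> w \<in> W \<and> u \<in> U)"

definition dist2 :: "'a set set \<Rightarrow> 'a \<Rightarrow> 'a \<Rightarrow> bool" where
  "dist2 E x y \<longleftrightarrow> x \<noteq> y \<and> {x, y} \<notin> E \<and> (\<exists>s. {x, s} \<in> E \<and> {s, y} \<in> E)"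

definition half_square_edges :: "'a set set \<Rightarrow> 'a set \<Rightarrow> 'a set set" where
  "half_square_edges E W = {{x, y} | x y. x \<in> W \<and> y \<in> W \<and> dist2 E x y}"

definition planar_graph :: "'a set \<Rightarrow> 'a set set \<Rightarrow> bool" where
  "planar_graph V E \<longleftrightarrow>
     (\<exists>(p :: 'a \<Rightarrow> complex) (g :: 'a set \<Rightarrow> real \<Rightarrow> complex).
        inj_on p V \<and>
        (\<forall>e\<in>E. arc (g e) \<and> {pathstart (g e), pathfinish (g e)} = p ` e) \<and>
        (\<forall>e\<in>E. \<forall>v\<in>V. p v \<in> path_image (g e) \<longrightarrow> v \<in> e) \<and>
        (\<forall>e\<in>E. \<forall>e'\<in>E. e \<noteq> e' \<longrightarrow>
            path_image (g e) \<inter> path_image (g e') \<subseteq> p ` (e \<inter> e')))"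

text \<open>A cycle is given by its cyclic vertex sequence; its length is the number of vertices (= edges).\<close>
definition is_cycle :: "'a set \<Rightarrow> 'a set set \<Rightarrow> 'a list \<Rightarrow> bool" where
  "is_cycle V E vs \<longleftrightarrow> length vs \<ge> 3 \<and> distinct vs \<and> set vs \<subseteq> V \<and>
     (\<forall>i < length vs. {vs ! i, vs ! (Suc i mod length vs)} \<in> E)"

definition cycle_edges :: "'a list \<Rightarrow> 'a set set" where
  "cycle_edges vs = {{vs ! i, vs ! (Suc i mod length vs)} | i. i < length vs}"

definition rooted_tree :: "'n set \<Rightarrow> ('n \<Rightarrow> 'n) \<Rightarrow> 'n \<Rightarrow> bool" where
  "rooted_tree N par r \<longleftrightarrow> finite N \<and> r \<in> N \<and> par r = r \<and>
     (\<forall>t\<in>N. par t \<in> N) \<and> (\<forall>t\<in>N. \<exists>k. (par ^^ k) t = r)"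

definition tree_edges :: "'n set \<Rightarrow> ('n \<Rightarrow> 'n) \<Rightarrow> 'n \<Rightarrow> 'n set set" where
  "tree_edges N par r = {{t, par t} | t. t \<in> N \<and> t \<noteq> r}"

definition children :: "'n set \<Rightarrow> ('n \<Rightarrow> 'n) \<Rightarrow> 'n \<Rightarrow> 'n \<Rightarrow> 'n set" where
  "children N par r t = {s \<in> N. s \<noteq> r \<and> par s = t}"

text \<open>s is a descendant of t (t itself included).\<close>
definition descendant :: "('n \<Rightarrow> 'n) \<Rightarrow> 'n \<Rightarrow> 'n \<Rightarrow> bool" where
  "descendant par t s \<longleftrightarrow> (\<exists>k. (par ^^ k) s = t)"

definition connected_sub :: "'n set set \<Rightarrow> 'n set \<Rightarrow> bool" where
  "connected_sub E S \<longleftrightarrow>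
     (\<forall>x\<in>S. \<forall>y\<in>S. (x, y) \<in> {(a, b). a \<in> S \<and> b \<in> S \<and> {a, b} \<in> E}\<^sup>*)"

definition tree_decomposition ::
  "'a set \<Rightarrow> 'a set set \<Rightarrow> 'n set \<Rightarrow> ('n \<Rightarrow> 'n) \<Rightarrow> 'n \<Rightarrow> ('n \<Rightarrow> 'a set) \<Rightarrow> bool" where
  "tree_decomposition V E N par r \<beta> \<longleftrightarrow> rooted_tree N par r \<and>
     (\<forall>t\<in>N. \<beta> t \<subseteq> V) \<and>
     (\<forall>v\<in>V. \<exists>t\<in>N. v \<in> \<beta> t) \<and>
     (\<forall>e\<in>E. \<exists>t\<in>N. e \<subseteq> \<beta> t) \<and>
     (\<forall>v\<in>V. connected_sub (tree_edges N par r) {t \<in> N. v \<in> \<beta> t})"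

definition nice_tree_decomposition ::
  "'a set \<Rightarrow> 'a set set \<Rightarrow> 'n set \<Rightarrow> ('n \<Rightarrow> 'n) \<Rightarrow> 'n \<Rightarrow> ('n \<Rightarrow> 'a set) \<Rightarrow> bool" where
  "nice_tree_decomposition V E N par r \<beta> \<longleftrightarrow> tree_decomposition V E N par r \<beta> \<and>
     \<beta> r = {} \<and>
     (\<forall>t\<in>N.
        (children N par r t = {} \<and> \<beta> t = {}) \<or>
        (\<exists>c v. children N par r t = {c} \<and> v \<notin> \<beta> c \<and> \<beta> t = insert v (\<beta> c)) \<or>
        (\<exists>c v. children N par r t = {c} \<and> v \<in> \<beta> c \<and> \<beta> t = \<beta> c - {v}) \<or>
        (\<exists>c1 c2. c1 \<noteq> c2 \<and> children N par r t = {c1, c2} \<and> \<beta> t = \<beta> c1 \<and> \<beta> t = \<beta> c2))"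

text \<open>Width = maximum bag size minus one (as a real number, to avoid truncation).\<close>
definition td_width :: "'n set \<Rightarrow> ('n \<Rightarrow> 'a set) \<Rightarrow> real" where
  "td_width N \<beta> = real (Max ((\<lambda>t. card (\<beta> t)) ` N)) - 1"

definition gamma :: "'n set \<Rightarrow> ('n \<Rightarrow> 'n) \<Rightarrow> ('n \<Rightarrow> 'a set) \<Rightarrow> 'n \<Rightarrow> 'a set" where
  "gamma N par \<beta> t = \<Union> {\<beta> s | s. s \<in> N \<and> descendant par t s}"

definition nbhd :: "'a set set \<Rightarrow> 'a \<Rightarrow> 'a set" where
  "nbhd E s = {x. {s, x} \<in> E}"

text \<open>Bags of the decomposition of G derived from a decomposition of B
  (VG = V(G), S = S(G), EB = E(B)).\<close>
definition derived_bag ::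
  "'a set \<Rightarrow> 'a set \<Rightarrow> 'a set set \<Rightarrow> 'n set \<Rightarrow> ('n \<Rightarrow> 'n) \<Rightarrow> ('n \<Rightarrow> 'a set) \<Rightarrow> 'n \<Rightarrow> 'a set" where
  "derived_bag VG S EB N par \<beta> t =
     (\<beta> t \<inter> VG) \<union> \<Union> {nbhd EB s \<inter> gamma N par \<beta> t | s. s \<in> \<beta> t \<inter> S}"

definition crossing_edges :: "'a list \<Rightarrow> 'a set \<Rightarrow> 'a set \<Rightarrow> nat" where
  "crossing_edges C X Y = card {e \<in> cycle_edges C. \<exists>u v. e = {u, v} \<and> u \<in> X \<and> v \<in> Y}"

end

theory Submission
  imports Defs
begin

text \<open>Among the cycles of G of the given length, take one minimising the potential that sums,
  over its edges xy, the number of nodes t whose cone gamma(t) separates x from y.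
  An edge of G crossing from a bag of the derived decomposition to the outside of its cone
  leaves gamma(t); charge it to its endpoint in the bag of t if there is one, and otherwise
  to a special common neighbour of its endpoints, which the tree decomposition forces into
  the bag of t. A vertex of G is charged at most twice because the cycle is simple. A special
  vertex is charged at most twice as well: two charged edges oriented alike could be
  replaced, by a 2-opt move through it, with two half-square edges that lower the
  potential. So at most 2 |bag| < 2 (5 sqrt(2k) + 1) \<le> 20 sqrt(2k) edges cross.\<close>

section \<open>Cycles as vertex lists\<close>

abbreviation cycle_next :: "'a list \<Rightarrow> nat \<Rightarrow> 'a" where
  "cycle_next C i \<equiv> C ! (Suc i mod length C)"

lemma Suc_mod_inj:
  assumes "i < n" "j < n" "Suc i mod n = Suc j mod n"
  shows "i = j"
proof -
  have "Suc x mod n = (if Suc x = n then 0 else Suc x)" if "x < n" for x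
    using that by auto
  then show ?thesis
    using assms by (auto split: if_splits)
qed

lemma cycle_next_inj:
  assumes "distinct C" "i < length C" "j < length C" "cycle_next C i = cycle_next C j"
  shows "i = j"
proof -
  have "0 < length C"
    using assms(2) by linarith
  then have "Suc i mod length C < length C" "Suc j mod length C < length C"
    by simp_all
  then have "Suc i mod length C = Suc j mod length C"
    using assms(1,4) nth_eq_iff_index_eq by blast
  then show ?thesis
    using Suc_mod_inj assms(2,3) by blast
qed

lemma card_cycle_edges_incident_le_2:
  assumes "distinct C"
  shows "card {i. i < length C \<and> x \<in> {C ! i, cycle_next C i}} \<le> 2"
proof -
  let ?A = "{i. i < length C \<and> C ! i = x}" and ?B = "{i. i < length C \<and> cycle_next C i = x}"
  have "card ?A \<le> 1"
    using nth_eq_iff_index_eq[OF assms] by (auto simp: card_le_Suc0_iff_eq)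
  moreover have "card ?B \<le> 1"
    using cycle_next_inj[OF assms] by (auto simp: card_le_Suc0_iff_eq)
  moreover have "card {i. i < length C \<and> x \<in> {C ! i, cycle_next C i}} \<le> card (?A \<union> ?B)"
    by (intro card_mono) auto
  ultimately show ?thesis
    using card_Un_le[of ?A ?B] by linarith
qed

fun adjacent_pairs :: "'a list \<Rightarrow> ('a \<times> 'a) list" where
  "adjacent_pairs (x # y # zs) = (x, y) # adjacent_pairs (y # zs)"
| "adjacent_pairs _ = []"

lemma adjacent_pairs_append:
  "xs \<noteq> [] \<Longrightarrow> ys \<noteq> [] \<Longrightarrow>
     adjacent_pairs (xs @ ys) = adjacent_pairs xs @ (last xs, hd ys) # adjacent_pairs ys"
  by (induction xs rule: adjacent_pairs.induct) (auto simp: neq_Nil_conv)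

lemma adjacent_pairs_rev: "adjacent_pairs (rev xs) = rev (map prod.swap (adjacent_pairs xs))"
proof (induction xs rule: adjacent_pairs.induct)
  case (1 x y zs)
  have "adjacent_pairs (rev (x # y # zs)) = adjacent_pairs (rev (y # zs) @ [x])"
    by simp
  also have "\<dots> = adjacent_pairs (rev (y # zs)) @ [(y, x)]"
    by (subst adjacent_pairs_append) auto
  finally show ?case
    using 1 by simp
qed auto

lemma length_adjacent_pairs: "length (adjacent_pairs xs) = length xs - 1"
  by (induction xs rule: adjacent_pairs.induct) auto

lemma nth_adjacent_pairs: "Suc i < length xs \<Longrightarrow> adjacent_pairs xs ! i = (xs ! i, xs ! Suc i)"
  by (induction xs arbitrary: i rule: adjacent_pairs.induct) (auto simp: nth_Cons split: nat.splits)

definition cycle_pairs :: "'a list \<Rightarrow> ('a \<times> 'a) list" where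
  "cycle_pairs C = adjacent_pairs (C @ [hd C])"

lemma set_cycle_pairs:
  assumes "C \<noteq> []"
  shows "set (cycle_pairs C) = (\<lambda>i. (C ! i, cycle_next C i)) ` {..<length C}"
proof -
  have len: "length (cycle_pairs C) = length C"
    by (simp add: cycle_pairs_def length_adjacent_pairs)
  have nth: "cycle_pairs C ! i = (C ! i, cycle_next C i)" if "i < length C" for i
  proof -
    have "(C @ [hd C]) ! Suc i = cycle_next C i"
    proof (cases "Suc i < length C")
      case False
      then have "Suc i = length C"
        using that by simp
      then show ?thesis
        using assms by (simp add: nth_append hd_conv_nth)
    qed (simp add: nth_append)
    then show ?thesis
      using that by (simp add: cycle_pairs_def nth_adjacent_pairs nth_append)
  qed
  show ?thesis
    by (auto simp: set_conv_nth len nth image_def) (metis len nth)+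
qed

lemma is_cycle_iff_cycle_pairs:
  "is_cycle V E C \<longleftrightarrow>
     3 \<le> length C \<and> distinct C \<and> set C \<subseteq> V \<and> (\<forall>(x, y) \<in> set (cycle_pairs C). {x, y} \<in> E)"
proof (cases "C = []")
  case False
  then show ?thesis
    by (auto simp: is_cycle_def set_cycle_pairs)
qed (simp add: is_cycle_def)

lemma is_cycle_nth_mem:
  assumes "is_cycle V E C" "i < length C"
  shows "C ! i \<in> V" "cycle_next C i \<in> V"
proof -
  have "0 < length C"
    using assms(2) by linarith
  then show "C ! i \<in> V" "cycle_next C i \<in> V"
    using assms unfolding is_cycle_def by auto
qed

definition cycle_cost :: "('a \<Rightarrow> 'a \<Rightarrow> 'b::comm_monoid_add) \<Rightarrow> 'a list \<Rightarrow> 'b" where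
  "cycle_cost g C = sum_list (map (case_prod g) (cycle_pairs C))"

text \<open>The 2-opt move: C' reverses the segment of C strictly between positions i and j + 1.\<close>
lemma cycle_pairs_two_opt:
  fixes C :: "'a list"
  assumes "distinct C" "i < j" "j < length C"
  obtains C' P M R where "length C' = length C" "set C' = set C" "distinct C'"
    "cycle_pairs C = P @ (C ! i, cycle_next C i) # M @ (C ! j, cycle_next C j) # R"
    "cycle_pairs C' = P @ (C ! i, C ! j) # rev (map prod.swap M) @ (cycle_next C i, cycle_next C j) # R"
proof -
  define C' where "C' = take (Suc i) C @ rev (take (j - i) (drop (Suc i) C)) @ drop (Suc j) C"
  define P where "P = take (Suc i) C"
  define M where "M = take (j - i) (drop (Suc i) C)"
  define D where "D = drop (Suc j) C"
  define R where "R = D @ [hd C]"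
  have "take (Suc i + (j - i)) C = P @ M"
    unfolding P_def M_def by (rule take_add)
  then have C: "C = P @ M @ D"
    using assms(2) unfolding D_def by (metis Suc_diff_le add_Suc append_assoc append_take_drop_id
        le_add_diff_inverse less_imp_le_nat)
  have C': "C' = P @ rev M @ D"
    unfolding C'_def P_def M_def D_def by simp
  have Pne: "P \<noteq> []" and Mne: "M \<noteq> []" and Rne: "R \<noteq> []"
    using assms unfolding P_def M_def R_def by auto
  have lastP: "last P = C ! i"
    using assms Pne unfolding P_def by (simp add: last_conv_nth min_def)
  have hdM: "hd M = cycle_next C i"
    using assms unfolding M_def by (simp add: hd_conv_nth)
  have lastM: "last M = C ! j"
    using assms Mne unfolding M_def by (simp add: last_conv_nth)
  have hdR: "hd R = cycle_next C j"
  proof (cases "Suc j < length C")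
    case False
    then have "Suc j = length C"
      using assms by simp
    moreover have "C \<noteq> []"
      using assms by auto
    ultimately show ?thesis
      unfolding R_def D_def by (simp add: hd_conv_nth)
  qed (simp add: R_def D_def hd_drop_conv_nth)
  have "C @ [hd C] = P @ M @ R" and "C' @ [hd C'] = P @ rev M @ R"
    using C C' Pne unfolding R_def by simp_all
  then have "cycle_pairs C = adjacent_pairs P @ (C ! i, cycle_next C i) # adjacent_pairs M @
               (C ! j, cycle_next C j) # adjacent_pairs R"
    and "cycle_pairs C' = adjacent_pairs P @ (C ! i, C ! j) # rev (map prod.swap (adjacent_pairs M)) @
               (cycle_next C i, cycle_next C j) # adjacent_pairs R"
    unfolding cycle_pairs_def using Pne Mne Rne
    by (simp_all add: adjacent_pairs_append lastP hdM lastM hdR hd_rev last_rev adjacent_pairs_rev)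
  moreover have "length C' = length C" "set C' = set C" "distinct C'"
    using C C' assms(1) by auto
  ultimately show ?thesis
    using that by blast
qed

lemma is_cycle_two_opt:
  fixes g :: "'a \<Rightarrow> 'a \<Rightarrow> 'b::comm_monoid_add"
  assumes "is_cycle V E C" "i < j" "j < length C"
    and "{C ! i, C ! j} \<in> E" "{cycle_next C i, cycle_next C j} \<in> E"
    and g_sym: "\<And>x y. g x y = g y x"
  obtains C' where "is_cycle V E C'" "length C' = length C"
    "cycle_cost g C' + g (C ! i) (cycle_next C i) + g (C ! j) (cycle_next C j) =
       cycle_cost g C + g (C ! i) (C ! j) + g (cycle_next C i) (cycle_next C j)"
proof -
  have "distinct C"
    using assms(1) by (simp add: is_cycle_def)
  from cycle_pairs_two_opt[OF this assms(2,3)] obtain C' P M R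
    where C': "length C' = length C" "set C' = set C" "distinct C'"
      and pairs: "cycle_pairs C = P @ (C ! i, cycle_next C i) # M @ (C ! j, cycle_next C j) # R"
        "cycle_pairs C' = P @ (C ! i, C ! j) # rev (map prod.swap M) @ (cycle_next C i, cycle_next C j) # R"
    by blast
  have old: "{x, y} \<in> E" if "(x, y) \<in> set P \<union> set M \<union> set R" for x y
    using that assms(1) unfolding is_cycle_iff_cycle_pairs pairs by auto
  have "{x, y} \<in> E" if "(x, y) \<in> set (cycle_pairs C')" for x y
    using that old[of x y] old[of y x] assms(4,5) unfolding pairs by (auto simp: insert_commute)
  then have "is_cycle V E C'"
    using assms(1) C' unfolding is_cycle_iff_cycle_pairs by auto
  moreover have "sum_list (map (case_prod g) (rev (map prod.swap M))) = sum_list (map (case_prod g) M)"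
    by (simp add: sum_list_rev rev_map[symmetric] comp_def g_sym case_prod_unfold)
  then have "cycle_cost g C' + g (C ! i) (cycle_next C i) + g (C ! j) (cycle_next C j) =
       cycle_cost g C + g (C ! i) (C ! j) + g (cycle_next C i) (cycle_next C j)"
    unfolding cycle_cost_def pairs by (simp add: ac_simps)
  ultimately show ?thesis
    using that C'(1) by blast
qed

definition crossing_indices :: "'a list \<Rightarrow> 'a set \<Rightarrow> nat set" where
  "crossing_indices C X = {i. i < length C \<and> (C ! i \<in> X) \<noteq> (cycle_next C i \<in> X)}"

definition charged_to :: "'a set set \<Rightarrow> 'a set \<Rightarrow> 'a list \<Rightarrow> nat \<Rightarrow> 'a \<Rightarrow> bool" where
  "charged_to E X C i x \<longleftrightarrow> x \<in> {C ! i, cycle_next C i} \<or>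
     (C ! i \<notin> X \<and> cycle_next C i \<notin> X \<and> {x, C ! i} \<in> E \<and> {x, cycle_next C i} \<in> E)"

lemma crossing_edges_le_card_crossing_indices:
  assumes "X \<subseteq> Z" "Y \<inter> Z = {}"
  shows "crossing_edges C X Y \<le> card (crossing_indices C Z)"
proof -
  let ?edge = "\<lambda>i. {C ! i, cycle_next C i}"
  have "{e \<in> cycle_edges C. \<exists>u v. e = {u, v} \<and> u \<in> X \<and> v \<in> Y} \<subseteq> ?edge ` crossing_indices C Z"
    using assms unfolding cycle_edges_def crossing_indices_def by (fastforce simp: doubleton_eq_iff)
  then have "crossing_edges C X Y \<le> card (?edge ` crossing_indices C Z)"
    unfolding crossing_edges_def crossing_indices_def by (intro card_mono) auto
  also have "\<dots> \<le> card (crossing_indices C Z)"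
    by (rule card_image_le) (simp add: crossing_indices_def)
  finally show ?thesis .
qed

section \<open>Cones of a tree decomposition\<close>

lemma descendant_refl: "descendant par t t"
  unfolding descendant_def by (rule exI[of _ 0]) simp

lemma descendant_trans: "descendant par a b \<Longrightarrow> descendant par b c \<Longrightarrow> descendant par a c"
  unfolding descendant_def by (metis comp_apply funpow_add)

lemma descendant_parent: "descendant par t (par s) \<Longrightarrow> descendant par t s"
  unfolding descendant_def by (metis funpow_Suc_right o_apply)

lemma descendant_linear:
  assumes "descendant par a c" "descendant par b c"
  shows "descendant par a b \<or> descendant par b a"
proof -
  obtain k m where k: "(par ^^ k) c = a" and m: "(par ^^ m) c = b"
    using assms unfolding descendant_def by blast
  show ?thesis
  proof (cases "k \<le> m")
    case True
    then have "(par ^^ (m - k)) a = b"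
      using k m by (metis comp_apply funpow_add le_add_diff_inverse2)
    then show ?thesis
      unfolding descendant_def by blast
  next
    case False
    then have "(par ^^ (k - m)) b = a"
      using k m by (metis comp_apply funpow_add le_add_diff_inverse2 nat_le_linear)
    then show ?thesis
      unfolding descendant_def by blast
  qed
qed

lemma mem_gamma_iff: "x \<in> gamma N par \<beta> t \<longleftrightarrow> (\<exists>s\<in>N. descendant par t s \<and> x \<in> \<beta> s)"
  unfolding gamma_def by blast

lemma bag_subset_gamma: "t \<in> N \<Longrightarrow> \<beta> t \<subseteq> gamma N par \<beta> t"
  using descendant_refl by (fastforce simp: mem_gamma_iff)

lemma gamma_mono: "descendant par t t' \<Longrightarrow> gamma N par \<beta> t' \<subseteq> gamma N par \<beta> t"
  by (auto simp: mem_gamma_iff) (meson descendant_trans)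

lemma derived_bag_subset_gamma: "t \<in> N \<Longrightarrow> derived_bag VG S EB N par \<beta> t \<subseteq> gamma N par \<beta> t"
  using bag_subset_gamma[of t N \<beta> par] unfolding derived_bag_def by blast

lemma gamma_derived_bag_disjoint:
  "(VG - gamma N par (derived_bag VG S EB N par \<beta>) t) \<inter> gamma N par \<beta> t = {}"
  unfolding derived_bag_def by (auto simp: mem_gamma_iff)

lemma card_bag_le_td_width: "finite N \<Longrightarrow> t \<in> N \<Longrightarrow> real (card (\<beta> t)) \<le> td_width N \<beta> + 1"
  unfolding td_width_def by simp

text \<open>The nodes whose bags contain v form a subtree; a path in it from inside the subtree
  of t to outside it must pass through t.\<close>
lemma tree_decomposition_mem_bag_if_leaves_subtree:
  assumes td: "tree_decomposition V E N par r \<beta>" and "v \<in> V"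
    and "d \<in> N" "c \<in> N" "v \<in> \<beta> d" "v \<in> \<beta> c"
    and "descendant par t d" "\<not> descendant par t c"
  shows "v \<in> \<beta> t"
proof -
  let ?S = "{t \<in> N. v \<in> \<beta> t}"
  have "connected_sub (tree_edges N par r) ?S"
    using td assms(2) unfolding tree_decomposition_def by blast
  then have "(d, c) \<in> {(a, b). a \<in> ?S \<and> b \<in> ?S \<and> {a, b} \<in> tree_edges N par r}\<^sup>*"
    using assms(3-6) unfolding connected_sub_def by blast
  then show ?thesis
    using assms(7,8)
  proof (induction rule: rtrancl_induct)
    case (step y z)
    show ?case
    proof (cases "descendant par t y")
      case True
      from step.hyps(2) have y: "y \<in> ?S" and "{y, z} \<in> tree_edges N par r"
        by auto
      then obtain u where "{y, z} = {u, par u}"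
        unfolding tree_edges_def by blast
      then consider "y = u" "z = par u" | "y = par u" "z = u"
        by (auto simp: doubleton_eq_iff)
      then show ?thesis
      proof cases
        case 1
        from True obtain k where k: "(par ^^ k) y = t"
          unfolding descendant_def by blast
        show ?thesis
        proof (cases k)
          case 0
          with k y show ?thesis by simp
        next
          case (Suc m)
          with k have "(par ^^ m) (par y) = t"
            by (simp add: funpow_Suc_right del: funpow.simps)
          with 1 have "descendant par t z"
            unfolding descendant_def by blast
          with step.prems show ?thesis by blast
        qed
      next
        case 2
        then have "descendant par t z"
          using True descendant_parent[of par t u] by simp
        with step.prems show ?thesis by blast
      qed
    qed (use step.IH step.prems in blast)
  qed simp
qed

lemma not_mem_gamma_if_incomparable:
  assumes td: "tree_decomposition V E N par r \<beta>"
    and "p \<in> V" "p \<in> gamma N par \<beta> t" "p \<notin> \<beta> t"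
    and "\<not> descendant par t t'" "\<not> descendant par t' t"
  shows "p \<notin> gamma N par \<beta> t'"
proof
  assume "p \<in> gamma N par \<beta> t'"
  then obtain c where c: "c \<in> N" "descendant par t' c" "p \<in> \<beta> c"
    by (auto simp: mem_gamma_iff)
  from assms(3) obtain d where d: "d \<in> N" "descendant par t d" "p \<in> \<beta> d"
    by (auto simp: mem_gamma_iff)
  have "\<not> descendant par t c"
    using descendant_linear[OF _ c(2)] assms(5,6) by blast
  then show False
    using tree_decomposition_mem_bag_if_leaves_subtree[OF td assms(2) d(1) c(1) d(3) c(3) d(2)] assms(4)
    by blast
qed

definition gamma_dist :: "'n set \<Rightarrow> ('n \<Rightarrow> 'n) \<Rightarrow> ('n \<Rightarrow> 'a set) \<Rightarrow> 'a \<Rightarrow> 'a \<Rightarrow> nat" where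
  "gamma_dist N par \<beta> x y = card {t \<in> N. (x \<in> gamma N par \<beta> t) \<noteq> (y \<in> gamma N par \<beta> t)}"

lemma gamma_dist_sym: "gamma_dist N par \<beta> x y = gamma_dist N par \<beta> y x"
  unfolding gamma_dist_def by (rule arg_cong[where f = card]) blast

text \<open>Uncrossing: if p, q lie in the cone of t but outside its bag and u, w lie outside the cone,
  then every node separating p from q, or u from w, also separates p from u or q from w,
  and t separates the latter two pairs only.\<close>
lemma gamma_dist_uncross:
  assumes td: "tree_decomposition V E N par r \<beta>" and "t \<in> N"
    and "p \<in> V" "q \<in> V" "p \<in> gamma N par \<beta> t" "q \<in> gamma N par \<beta> t" "p \<notin> \<beta> t" "q \<notin> \<beta> t"
    and "u \<notin> gamma N par \<beta> t" "w \<notin> gamma N par \<beta> t"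
  shows "gamma_dist N par \<beta> p q + gamma_dist N par \<beta> u w < gamma_dist N par \<beta> p u + gamma_dist N par \<beta> q w"
proof -
  let ?g = "gamma N par \<beta>"
  let ?sep = "\<lambda>x y t'. of_bool ((x \<in> ?g t') \<noteq> (y \<in> ?g t')) :: nat"
  have fin: "finite N"
    using td unfolding tree_decomposition_def rooted_tree_def by blast
  have gamma_dist_sum: "gamma_dist N par \<beta> x y = (\<Sum>t'\<in>N. ?sep x y t')" for x y
    unfolding gamma_dist_def using fin by (simp add: Collect_conj_eq Int_commute)
  have le: "?sep p q t' + ?sep u w t' \<le> ?sep p u t' + ?sep q w t'" if "t' \<in> N" for t'
  proof -
    consider "descendant par t t'" | "descendant par t' t"
      | "\<not> descendant par t t'" "\<not> descendant par t' t"
      by blast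
    then show ?thesis
    proof cases
      case 1
      then show ?thesis
        using gamma_mono[OF 1, of N \<beta>] assms(9,10) by auto
    next
      case 2
      then show ?thesis
        using gamma_mono[OF 2, of N \<beta>] assms(5,6) by auto
    next
      case 3
      then show ?thesis
        using not_mem_gamma_if_incomparable[OF td] assms(3-8) by auto
    qed
  qed
  have lt: "?sep p q t + ?sep u w t < ?sep p u t + ?sep q w t"
    using assms(5,6,9,10) by auto
  have "(\<Sum>t'\<in>N. ?sep p q t' + ?sep u w t') < (\<Sum>t'\<in>N. ?sep p u t' + ?sep q w t')"
    by (rule sum_strict_mono_ex1[OF fin]) (use le lt assms(2) in blast)+
  then show ?thesis
    unfolding gamma_dist_sum sum.distrib .
qed

section \<open>Half-squares of bipartite graphs\<close>

lemma bipartition_no_edge_within: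
  assumes "bipartition V E W U" "x \<in> W" "y \<in> W"
  shows "{x, y} \<notin> E"
proof
  assume "{x, y} \<in> E"
  then obtain w u where "{x, y} = {w, u}" "u \<in> U" "W \<inter> U = {}"
    using assms(1) unfolding bipartition_def by blast
  then show False
    using assms(2,3) by (auto simp: doubleton_eq_iff)
qed

lemma bipartition_edge_subset:
  assumes "bipartition V E W U" "e \<in> E"
  shows "e \<subseteq> V"
proof -
  obtain w u where "e = {w, u}" "w \<in> W" "u \<in> U" "V = W \<union> U"
    using assms unfolding bipartition_def by blast
  then show ?thesis
    by blast
qed

lemma half_square_edgeI:
  assumes "bipartition V E W U" "x \<in> W" "y \<in> W" "x \<noteq> y" "{s, x} \<in> E" "{s, y} \<in> E"
  shows "{x, y} \<in> half_square_edges E W"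
proof -
  have "dist2 E x y"
    unfolding dist2_def using assms bipartition_no_edge_within[OF assms(1-3)] by (auto simp: insert_commute)
  then show ?thesis
    unfolding half_square_edges_def using assms(2,3) by blast
qed

lemma half_square_edge_leaving_gamma:
  assumes td: "tree_decomposition V E N par r \<beta>" and bp: "bipartition V E W U"
    and "{x, y} \<in> half_square_edges E W"
    and "x \<in> gamma N par \<beta> t" "x \<notin> \<beta> t" "y \<notin> gamma N par \<beta> t"
  obtains s where "s \<in> \<beta> t" "{s, x} \<in> E" "{s, y} \<in> E"
proof -
  obtain x' y' where "{x, y} = {x', y'}" "dist2 E x' y'"
    using assms(3) unfolding half_square_edges_def by blast
  then obtain s where s: "{s, x} \<in> E" "{s, y} \<in> E"
    unfolding dist2_def by (auto simp: doubleton_eq_iff insert_commute)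
  have sx: "s \<in> V" "x \<in> V"
    using bipartition_edge_subset[OF bp s(1)] by auto
  obtain a where a: "a \<in> N" "{s, x} \<subseteq> \<beta> a"
    using td s(1) unfolding tree_decomposition_def by blast
  obtain b where b: "b \<in> N" "{s, y} \<subseteq> \<beta> b"
    using td s(2) unfolding tree_decomposition_def by blast
  obtain d where d: "d \<in> N" "descendant par t d" "x \<in> \<beta> d"
    using assms(4) by (auto simp: mem_gamma_iff)
  have "descendant par t a"
    using tree_decomposition_mem_bag_if_leaves_subtree[OF td sx(2) d(1) a(1) d(3) _ d(2)] a(2) assms(5)
    by blast
  moreover have "\<not> descendant par t b"
    using b assms(6) by (auto simp: mem_gamma_iff)
  ultimately have "s \<in> \<beta> t"
    using tree_decomposition_mem_bag_if_leaves_subtree[OF td sx(1) a(1) b(1)] a(2) b(2) by blast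
  then show ?thesis
    using that s by blast
qed

section \<open>Cycles of least separation cost\<close>

context
  fixes VB :: "'a set" and EB :: "'a set set" and VG S :: "'a set"
    and N :: "'n set" and par :: "'n \<Rightarrow> 'n" and r :: 'n and \<beta> :: "'n \<Rightarrow> 'a set"
  assumes td: "tree_decomposition VB EB N par r \<beta>"
    and bp: "bipartition VB EB VG S"
begin

text \<open>The 2-opt move replaces the two edges by the chords through s, which are half-square
  edges and by uncrossing cost strictly less.\<close>
lemma min_cost_cycle_no_parallel_detours:
  assumes cyc: "is_cycle VG (half_square_edges EB VG) C"
    and minimal: "\<And>C'. is_cycle VG (half_square_edges EB VG) C' \<Longrightarrow> length C' = length C \<Longrightarrow>
                   cycle_cost (gamma_dist N par \<beta>) C \<le> cycle_cost (gamma_dist N par \<beta>) C'"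
    and tN: "t \<in> N" and ij: "i < j" "j < length C"
    and cross: "(C ! i \<in> gamma N par \<beta> t) \<noteq> (cycle_next C i \<in> gamma N par \<beta> t)"
      "(C ! j \<in> gamma N par \<beta> t) \<noteq> (cycle_next C j \<in> gamma N par \<beta> t)"
    and parallel: "(C ! i \<in> gamma N par \<beta> t) = (C ! j \<in> gamma N par \<beta> t)"
    and outside: "C ! i \<notin> \<beta> t" "cycle_next C i \<notin> \<beta> t" "C ! j \<notin> \<beta> t" "cycle_next C j \<notin> \<beta> t"
    and detour: "{s, C ! i} \<in> EB" "{s, cycle_next C i} \<in> EB" "{s, C ! j} \<in> EB" "{s, cycle_next C j} \<in> EB"
  shows False
proof -
  let ?D = "gamma_dist N par \<beta>" and ?g = "gamma N par \<beta> t"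
  define a b c d where "a = C ! i" "b = cycle_next C i" "c = C ! j" "d = cycle_next C j"
  have dist: "distinct C"
    using cyc by (simp add: is_cycle_def)
  have abcd: "a \<in> VG" "b \<in> VG" "c \<in> VG" "d \<in> VG"
    using is_cycle_nth_mem[OF cyc] ij unfolding a_b_c_d_def by simp_all
  note facts = cross[folded a_b_c_d_def] parallel[folded a_b_c_d_def]
    outside[folded a_b_c_d_def] detour[folded a_b_c_d_def]
  have "a \<noteq> c"
    using dist ij unfolding a_b_c_d_def by (simp add: nth_eq_iff_index_eq)
  moreover have "b \<noteq> d"
    using cycle_next_inj[OF dist, of i j] ij unfolding a_b_c_d_def by auto
  ultimately have "{a, c} \<in> half_square_edges EB VG" "{b, d} \<in> half_square_edges EB VG"
    using half_square_edgeI[OF bp abcd(1,3) _ facts(8,10)] half_square_edgeI[OF bp abcd(2,4) _ facts(9,11)]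
    by blast+
  then obtain C' where C': "is_cycle VG (half_square_edges EB VG) C'" "length C' = length C"
    and cost_ij: "cycle_cost ?D C' + ?D (C ! i) (cycle_next C i) + ?D (C ! j) (cycle_next C j) =
         cycle_cost ?D C + ?D (C ! i) (C ! j) + ?D (cycle_next C i) (cycle_next C j)"
    unfolding a_b_c_d_def by (rule is_cycle_two_opt[OF cyc ij _ _ gamma_dist_sym])
  have cost: "cycle_cost ?D C' + ?D a b + ?D c d = cycle_cost ?D C + ?D a c + ?D b d"
    using cost_ij unfolding a_b_c_d_def .
  have VB: "VG \<subseteq> VB"
    using bp unfolding bipartition_def by blast
  have "?D a c + ?D b d < ?D a b + ?D c d"
  proof (cases "a \<in> ?g")
    case True
    then have "c \<in> ?g" "b \<notin> ?g" "d \<notin> ?g"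
      using facts(1-3) by auto
    then show ?thesis
      using gamma_dist_uncross[OF td tN _ _ True _ facts(4,6)] abcd VB by blast
  next
    case False
    then have "b \<in> ?g" "d \<in> ?g" "c \<notin> ?g"
      using facts(1-3) by auto
    then have "?D b d + ?D a c < ?D b a + ?D d c"
      using gamma_dist_uncross[OF td tN _ _ _ _ facts(5,7) _ _] False abcd VB by blast
    then show ?thesis
      by (simp add: gamma_dist_sym[of N par \<beta> b a] gamma_dist_sym[of N par \<beta> d c])
  qed
  then have "cycle_cost ?D C' < cycle_cost ?D C"
    using cost by linarith
  then show False
    using minimal[OF C'] by simp
qed

lemma min_cost_cycle_card_detours_le_2:
  assumes cyc: "is_cycle VG (half_square_edges EB VG) C"
    and minimal: "\<And>C'. is_cycle VG (half_square_edges EB VG) C' \<Longrightarrow> length C' = length C \<Longrightarrow>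
                   cycle_cost (gamma_dist N par \<beta>) C \<le> cycle_cost (gamma_dist N par \<beta>) C'"
    and tN: "t \<in> N"
  shows "card {i \<in> crossing_indices C (gamma N par \<beta> t).
            C ! i \<notin> \<beta> t \<and> cycle_next C i \<notin> \<beta> t \<and> {s, C ! i} \<in> EB \<and> {s, cycle_next C i} \<in> EB} \<le> 2"
    (is "card ?A \<le> 2")
proof -
  let ?in = "{i. C ! i \<in> gamma N par \<beta> t}"
  have no_pair: False if "i \<in> ?A" "j \<in> ?A" "(i \<in> ?in) = (j \<in> ?in)" "i < j" for i j
  proof (rule min_cost_cycle_no_parallel_detours[OF cyc minimal tN \<open>i < j\<close>, where s = s])
    show "j < length C"
      using that(2) unfolding crossing_indices_def by blast
  qed (use that(1-3) in \<open>simp_all add: crossing_indices_def\<close>)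
  have same_side_eq: "i = j" if "i \<in> ?A" "j \<in> ?A" "(i \<in> ?in) = (j \<in> ?in)" for i j
    using no_pair[of i j] no_pair[of j i] that by (metis linorder_neqE_nat)
  have "finite ?A"
    unfolding crossing_indices_def by simp
  then have "card (?A \<inter> ?in) \<le> 1" "card (?A - ?in) \<le> 1"
    using same_side_eq by (auto simp: card_le_Suc0_iff_eq)
  moreover have "card ?A \<le> card (?A \<inter> ?in) + card (?A - ?in)"
    using card_Un_le[of "?A \<inter> ?in" "?A - ?in"] by (simp add: Int_Diff_Un)
  ultimately show ?thesis
    by linarith
qed

lemma crossing_index_charged:
  assumes cyc: "is_cycle VG (half_square_edges EB VG) C"
    and i: "i \<in> crossing_indices C (gamma N par \<beta> t)"
  obtains x where "x \<in> \<beta> t" "charged_to EB (\<beta> t) C i x"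
proof (cases "C ! i \<in> \<beta> t \<or> cycle_next C i \<in> \<beta> t")
  case True
  then show ?thesis
    using that unfolding charged_to_def by blast
next
  case False
  have edge: "{C ! i, cycle_next C i} \<in> half_square_edges EB VG"
    using cyc i unfolding is_cycle_def crossing_indices_def by blast
  consider "C ! i \<in> gamma N par \<beta> t" "cycle_next C i \<notin> gamma N par \<beta> t"
    | "cycle_next C i \<in> gamma N par \<beta> t" "C ! i \<notin> gamma N par \<beta> t"
    using i unfolding crossing_indices_def by auto
  then obtain s where "s \<in> \<beta> t" "{s, C ! i} \<in> EB" "{s, cycle_next C i} \<in> EB"
  proof cases
    case 1
    then show ?thesis
      using half_square_edge_leaving_gamma[OF td bp edge] False that by blast
  next
    case 2
    then show ?thesis
      using half_square_edge_leaving_gamma[OF td bp edge[unfolded insert_commute[of "C ! i"]]]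
        False that by blast
  qed
  then show ?thesis
    using False that unfolding charged_to_def by blast
qed

lemma min_cost_cycle_card_charged_le_2:
  assumes cyc: "is_cycle VG (half_square_edges EB VG) C"
    and minimal: "\<And>C'. is_cycle VG (half_square_edges EB VG) C' \<Longrightarrow> length C' = length C \<Longrightarrow>
                   cycle_cost (gamma_dist N par \<beta>) C \<le> cycle_cost (gamma_dist N par \<beta>) C'"
    and tN: "t \<in> N"
  shows "card {i \<in> crossing_indices C (gamma N par \<beta> t). charged_to EB (\<beta> t) C i x} \<le> 2"
proof (cases "x \<in> VG")
  case True
  have "{i \<in> crossing_indices C (gamma N par \<beta> t). charged_to EB (\<beta> t) C i x}
          \<subseteq> {i. i < length C \<and> x \<in> {C ! i, cycle_next C i}}"
  proof
    fix i assume "i \<in> {i \<in> crossing_indices C (gamma N par \<beta> t). charged_to EB (\<beta> t) C i x}"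
    then have i: "i < length C" and "x \<in> {C ! i, cycle_next C i} \<or> {x, C ! i} \<in> EB"
      unfolding charged_to_def crossing_indices_def by auto
    moreover have "{x, C ! i} \<notin> EB"
      using bipartition_no_edge_within[OF bp True is_cycle_nth_mem(1)[OF cyc i]] .
    ultimately show "i \<in> {i. i < length C \<and> x \<in> {C ! i, cycle_next C i}}"
      by blast
  qed
  then have "card {i \<in> crossing_indices C (gamma N par \<beta> t). charged_to EB (\<beta> t) C i x}
               \<le> card {i. i < length C \<and> x \<in> {C ! i, cycle_next C i}}"
    by (rule card_mono[rotated]) simp
  also have "\<dots> \<le> 2"
    using cyc by (intro card_cycle_edges_incident_le_2) (simp add: is_cycle_def)
  finally show ?thesis .
next
  case False
  have "{i \<in> crossing_indices C (gamma N par \<beta> t). charged_to EB (\<beta> t) C i x}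
          \<subseteq> {i \<in> crossing_indices C (gamma N par \<beta> t). C ! i \<notin> \<beta> t \<and> cycle_next C i \<notin> \<beta> t \<and>
                {x, C ! i} \<in> EB \<and> {x, cycle_next C i} \<in> EB}"
  proof
    fix i assume i: "i \<in> {i \<in> crossing_indices C (gamma N par \<beta> t). charged_to EB (\<beta> t) C i x}"
    then have "x \<notin> {C ! i, cycle_next C i}"
      using False is_cycle_nth_mem[OF cyc] unfolding crossing_indices_def by blast
    then show "i \<in> {i \<in> crossing_indices C (gamma N par \<beta> t). C ! i \<notin> \<beta> t \<and> cycle_next C i \<notin> \<beta> t \<and>
                {x, C ! i} \<in> EB \<and> {x, cycle_next C i} \<in> EB}"
      using i unfolding charged_to_def by blast
  qed
  then have "card {i \<in> crossing_indices C (gamma N par \<beta> t). charged_to EB (\<beta> t) C i x}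
               \<le> card {i \<in> crossing_indices C (gamma N par \<beta> t). C ! i \<notin> \<beta> t \<and> cycle_next C i \<notin> \<beta> t \<and>
                     {x, C ! i} \<in> EB \<and> {x, cycle_next C i} \<in> EB}"
    by (rule card_mono[rotated]) (simp add: crossing_indices_def)
  also have "\<dots> \<le> 2"
    by (rule min_cost_cycle_card_detours_le_2[OF cyc minimal tN])
  finally show ?thesis .
qed

lemma min_cost_cycle_card_crossing_indices_le:
  assumes cyc: "is_cycle VG (half_square_edges EB VG) C"
    and minimal: "\<And>C'. is_cycle VG (half_square_edges EB VG) C' \<Longrightarrow> length C' = length C \<Longrightarrow>
                   cycle_cost (gamma_dist N par \<beta>) C \<le> cycle_cost (gamma_dist N par \<beta>) C'"
    and tN: "t \<in> N" and fin: "finite VB"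
  shows "card (crossing_indices C (gamma N par \<beta> t)) \<le> 2 * card (\<beta> t)"
proof -
  let ?I = "crossing_indices C (gamma N par \<beta> t)"
  let ?F = "\<lambda>x. {i \<in> ?I. charged_to EB (\<beta> t) C i x}"
  have "finite (\<beta> t)"
    using td tN fin unfolding tree_decomposition_def by (meson finite_subset)
  moreover have "?I \<subseteq> (\<Union>x \<in> \<beta> t. ?F x)"
    using crossing_index_charged[OF cyc] by blast
  moreover have "finite (?F x)" for x
    unfolding crossing_indices_def by simp
  ultimately have "card ?I \<le> (\<Sum>x \<in> \<beta> t. card (?F x))"
    using card_UN_le[of "\<beta> t" ?F] by (meson card_mono finite_UN_I order_trans)
  also have "\<dots> \<le> 2 * card (\<beta> t)"
    using sum_bounded_above[of "\<beta> t" "\<lambda>x. card (?F x)" 2]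
      min_cost_cycle_card_charged_le_2[OF cyc minimal tN] by (simp add: mult.commute)
  finally show ?thesis .
qed

lemma exists_cycle_crossing_edges_le:
  assumes fin: "finite VB" and "is_cycle VG (half_square_edges EB VG) C"
  shows "\<exists>C'. is_cycle VG (half_square_edges EB VG) C' \<and> length C' = length C \<and>
           (\<forall>t\<in>N. crossing_edges C' (derived_bag VG S EB N par \<beta> t)
                      (VG - gamma N par (derived_bag VG S EB N par \<beta>) t) \<le> 2 * card (\<beta> t))"
proof -
  let ?P = "\<lambda>C'. is_cycle VG (half_square_edges EB VG) C' \<and> length C' = length C"
    and ?cost = "cycle_cost (gamma_dist N par \<beta>)"
  obtain C0 where "?P C0" and least: "\<forall>C'. ?P C' \<longrightarrow> ?cost C0 \<le> ?cost C'"
    using ex_has_least_nat[of ?P C ?cost] assms(2) by blast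
  then have C0: "is_cycle VG (half_square_edges EB VG) C0" "length C0 = length C"
    and minimal: "\<And>C'. is_cycle VG (half_square_edges EB VG) C' \<Longrightarrow> length C' = length C0 \<Longrightarrow>
                   ?cost C0 \<le> ?cost C'"
    by simp_all
  have "crossing_edges C0 (derived_bag VG S EB N par \<beta> t) (VG - gamma N par (derived_bag VG S EB N par \<beta>) t)
          \<le> 2 * card (\<beta> t)" if tN: "t \<in> N" for t
  proof -
    have "crossing_edges C0 (derived_bag VG S EB N par \<beta> t) (VG - gamma N par (derived_bag VG S EB N par \<beta>) t)
            \<le> card (crossing_indices C0 (gamma N par \<beta> t))"
      by (rule crossing_edges_le_card_crossing_indices[OF derived_bag_subset_gamma[OF tN]
            gamma_derived_bag_disjoint])
    also have "\<dots> \<le> 2 * card (\<beta> t)"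
      by (rule min_cost_cycle_card_crossing_indices_le[OF C0(1) minimal tN fin])
    finally show ?thesis .
  qed
  then show ?thesis
    using C0 by blast
qed

end

theorem lemma25:
  fixes VB :: "'a set" and EB :: "'a set set" and VG S :: "'a set" and EG :: "'a set set"
    and N :: "'n set" and par :: "'n \<Rightarrow> 'n" and r :: 'n and \<beta> :: "'n \<Rightarrow> 'a set"
    and k :: nat and C :: "'a list"
  assumes "simple_graph VB EB"
    and "bipartition VB EB VG S"
    and "planar_graph VB EB"
    and "EG = half_square_edges EB VG"
    and "k > 0"
    and "nice_tree_decomposition VB EB N par r \<beta>"
    and "td_width N \<beta> < 5 * sqrt (2 * real k)"
    and "is_cycle VG EG C"
  shows "\<exists>C'. is_cycle VG EG C' \<and> length C' = length C \<and>
           (\<forall>t\<in>N. real (crossing_edges C' (derived_bag VG S EB N par \<beta> t)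
                      (VG - gamma N par (derived_bag VG S EB N par \<beta>) t))
                   \<le> 20 * sqrt (2 * real k))"
proof -
  have td: "tree_decomposition VB EB N par r \<beta>"
    using assms(6) unfolding nice_tree_decomposition_def by blast
  have "finite VB" "finite N"
    using assms(1) td unfolding simple_graph_def tree_decomposition_def rooted_tree_def by blast+
  have "is_cycle VG (half_square_edges EB VG) C"
    using assms(4,8) by simp
  then obtain C' where C': "is_cycle VG (half_square_edges EB VG) C'" "length C' = length C"
    and crossing: "\<forall>t\<in>N. crossing_edges C' (derived_bag VG S EB N par \<beta> t)
                      (VG - gamma N par (derived_bag VG S EB N par \<beta>) t) \<le> 2 * card (\<beta> t)"
    using exists_cycle_crossing_edges_le[OF td assms(2) \<open>finite VB\<close>] by blast
  let ?crossing = "\<lambda>t. crossing_edges C' (derived_bag VG S EB N par \<beta> t)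
                        (VG - gamma N par (derived_bag VG S EB N par \<beta>) t)"
  have "1 \<le> sqrt (2 * real k)"
    using assms(5) by simp
  then have "2 * real (card (\<beta> t)) \<le> 20 * sqrt (2 * real k)" if "t \<in> N" for t
    using card_bag_le_td_width[of N t \<beta>] \<open>finite N\<close> that assms(7) by linarith
  moreover have "real (?crossing t) \<le> 2 * real (card (\<beta> t))" if "t \<in> N" for t
    using crossing that by (metis of_nat_le_iff of_nat_mult of_nat_numeral)
  ultimately have "real (?crossing t) \<le> 20 * sqrt (2 * real k)" if "t \<in> N" for t
    using that by (meson order_trans)
  then show ?thesis
    using C' assms(4) by blast
qed

end
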